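(* Let $\mu=\mathcal{N}(0,\sigma_X^2)$ and $\psi=\mathcal{N}(0,\sigma_Y^2)$ on $\mathbb{R}$ with $\sigma_X,\sigma_Y>0$, and $\rho(x,y)=(x-y)^2$. Then the minimum in $I(\mu\|\psi,D)=\min\{I(X;Y):P_X=\mu,P_Y=\psi,\mathbb{E}[(X-Y)^2]\le D\}$ may be restricted to jointly Gaussian $(X,Y)$, and for $(\sigma_X-\sigma_Y)^2\le D\le\sigma_X^2+\sigma_Y^2$, $$I(\mu\|\psi,D)=\frac12\log\frac{1}{1-r^2},\qquad r=\frac{\sigma_X^2+\sigma_Y^2-D}{2\sigma_X\sigma_Y}.$$
   Context: $I(\mu\|\psi,D)$ is the minimum mutual information with constrained output; by the paper's main theorem it equals the minimum coding rate when unlimited common randomness is shared between encoder and decoder in the output-constrained (output exactly i.i.d. $\psi$) lossy source coding problem. *)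

theory Defs
  imports "HOL-Probability.Probability"
begin

definition mutual_info :: "(real \<times> real) measure \<Rightarrow> ereal" where
  "mutual_info P =
     (let Q = distr P borel fst \<Otimes>\<^sub>M distr P borel snd in
      if absolutely_continuous Q P \<and> integrable P (entropy_density (exp 1) Q P)
      then ereal (KL_divergence (exp 1) Q P) else \<infinity>)"

definition gauss_coupling :: "real \<Rightarrow> real \<Rightarrow> real \<Rightarrow> (real \<times> real) measure \<Rightarrow> bool" where
  "gauss_coupling sx sy D P \<longleftrightarrow>
     sets P = sets (borel \<Otimes>\<^sub>M borel) \<and> prob_space P \<and>
     distr P borel fst = density lborel (normal_density 0 sx) \<and>
     distr P borel snd = density lborel (normal_density 0 sy) \<and>
     integrable P (\<lambda>z. (fst z - snd z)\<^sup>2) \<and>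
     (\<integral>z. (fst z - snd z)\<^sup>2 \<partial>P) \<le> D"

definition jointly_gaussian :: "(real \<times> real) measure \<Rightarrow> bool" where
  "jointly_gaussian P \<longleftrightarrow>
     (\<exists>a b c d m n. P = distr (density lborel std_normal_density \<Otimes>\<^sub>M density lborel std_normal_density)
        (borel \<Otimes>\<^sub>M borel) (\<lambda>(u, v). (a * u + b * v + m, c * u + d * v + n)))"

definition I_out :: "real \<Rightarrow> real \<Rightarrow> real \<Rightarrow> ereal" where
  "I_out sx sy D = (INF P \<in> {P. gauss_coupling sx sy D P}. mutual_info P)"

end

theory Submission
  imports Defs
begin

(* For |r| < 1 let g_r be the log-density of the centred bivariate normal law with marginals
   N(0,a^2), N(0,b^2) and correlation r, relative to the product of these marginals.  As exp g_r
   integrates to 1 against that product, Gibbs' inequality gives I(X;Y) >= E g_r(X,Y) for every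
   coupling, and E g_r only depends on the coupling through E(X-Y)^2: with
   rho = (a^2 + b^2 - E(X-Y)^2) / (2ab) it equals -ln sqrt(1-r^2) + r (rho - r) / (1 - r^2).
   For r = max 0 rho_D this yields the lower bound -ln sqrt(1-r^2), which the Gaussian coupling with
   correlation r attains; if rho_D >= 1, letting r tend to 1 forces infinite mutual information. *)

definition normal_measure :: "real \<Rightarrow> real measure" where
  "normal_measure \<sigma> = density lborel (normal_density 0 \<sigma>)"

definition gauss_map :: "real \<Rightarrow> real \<Rightarrow> real \<Rightarrow> real \<times> real \<Rightarrow> real \<times> real" where
  "gauss_map a b r = (\<lambda>(u, v). (a * u, b * (r * u + sqrt (1 - r\<^sup>2) * v)))"

definition gauss_pair :: "real \<Rightarrow> real \<Rightarrow> real \<Rightarrow> (real \<times> real) measure" where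
  "gauss_pair a b r = distr (normal_measure 1 \<Otimes>\<^sub>M normal_measure 1) (borel \<Otimes>\<^sub>M borel) (gauss_map a b r)"

text \<open>The logarithm of the density of \<open>gauss_pair a b r\<close> with respect to the product of its marginals.\<close>
definition gauss_log_ratio :: "real \<Rightarrow> real \<Rightarrow> real \<Rightarrow> real \<times> real \<Rightarrow> real" where
  "gauss_log_ratio a b r = (\<lambda>(x, y).
     - ln (sqrt (1 - r\<^sup>2)) - r * (r * (x/a)\<^sup>2 - 2 * (x/a) * (y/b) + r * (y/b)\<^sup>2) / (2 * (1 - r\<^sup>2)))"

lemma sets_normal_measure [simp, measurable_cong]: "sets (normal_measure \<sigma>) = sets borel"
  by (simp add: normal_measure_def)

lemma sets_normal_measure_pair [measurable_cong]:
  "sets (normal_measure \<sigma> \<Otimes>\<^sub>M normal_measure \<tau>) = sets (borel \<Otimes>\<^sub>M borel)"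
  by (intro sets_pair_measure_cong) simp_all

lemma prob_space_normal_measure: "\<sigma> > 0 \<Longrightarrow> prob_space (normal_measure \<sigma>)"
  unfolding normal_measure_def by (rule prob_space_normal_density)

lemma measurable_gauss_map [measurable]: "gauss_map a b r \<in> (borel \<Otimes>\<^sub>M borel) \<rightarrow>\<^sub>M (borel \<Otimes>\<^sub>M borel)"
  unfolding gauss_map_def by measurable

lemma borel_measurable_gauss_log_ratio [measurable]: "gauss_log_ratio a b r \<in> borel_measurable (borel \<Otimes>\<^sub>M borel)"
  unfolding gauss_log_ratio_def by measurable

lemma gauss_log_ratio_swap: "gauss_log_ratio a b r (y, x) = gauss_log_ratio b a r (x, y)"
  by (simp add: gauss_log_ratio_def algebra_simps)

lemma nn_integral_lborel_affine_subst:
  fixes c :: real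
  assumes [measurable]: "f \<in> borel_measurable borel" and "c \<noteq> 0"
  shows "(\<integral>\<^sup>+x. f x \<partial>lborel) = (\<integral>\<^sup>+x. ennreal \<bar>c\<bar> * f (t + c * x) \<partial>lborel)"
  by (subst lborel_real_affine[OF \<open>c \<noteq> 0\<close>, of t]) (simp add: nn_integral_density nn_integral_distr)

lemma emeasure_distr_eq_nn_integral:
  assumes [measurable]: "f \<in> M \<rightarrow>\<^sub>M N" "A \<in> sets N"
  shows "emeasure (distr M N f) A = (\<integral>\<^sup>+z. indicator A (f z) \<partial>M)"
proof -
  have "emeasure (distr M N f) A = (\<integral>\<^sup>+z. indicator A z \<partial>distr M N f)"
    by simp
  also have "\<dots> = (\<integral>\<^sup>+z. indicator A (f z) \<partial>M)"
    by (rule nn_integral_distr) simp_all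
  finally show ?thesis .
qed

lemma normal_density_scale: "a > 0 \<Longrightarrow> a * normal_density 0 a (a * u) = std_normal_density u"
  by (simp add: normal_density_def real_sqrt_mult field_simps power2_eq_square)

lemma gauss_conditional_density:
  assumes "a > 0" "b > 0" "\<bar>r\<bar> < 1"
  defines "s \<equiv> sqrt (1 - r\<^sup>2)"
  shows "b * s * normal_density 0 b (b * (r * u + s * v)) * exp (gauss_log_ratio a b r (a * u, b * (r * u + s * v)))
     = std_normal_density v"
proof -
  have s2: "s\<^sup>2 = 1 - r\<^sup>2" and "s > 0"
    using assms(3) unfolding s_def by (simp_all add: abs_square_less_1 less_imp_le)
  define w where "w = r * u + s * v"
  define X where "X = r * (r * u\<^sup>2 - 2 * u * w + r * w\<^sup>2) / (2 * s\<^sup>2)"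
  have "gauss_log_ratio a b r (a * u, b * w) = - ln s - X"
    using assms(1,2) unfolding gauss_log_ratio_def s_def[symmetric] s2 X_def by simp
  then have "s * exp (gauss_log_ratio a b r (a * u, b * w)) = exp (- X)"
    using \<open>s > 0\<close> by (simp add: exp_diff exp_minus divide_inverse)
  then have "b * s * normal_density 0 b (b * w) * exp (gauss_log_ratio a b r (a * u, b * w))
      = std_normal_density w * exp (- X)"
    by (metis normal_density_scale[OF assms(2)] mult.commute mult.left_commute)
  also have "\<dots> = (1 / sqrt (2 * pi)) * exp (- w\<^sup>2 / 2 + - X)"
    by (simp only: std_normal_density_def mult_exp_exp mult.assoc)
  also have "- w\<^sup>2 / 2 + - X = - v\<^sup>2 / 2"
  proof -
    have "w\<^sup>2 * s\<^sup>2 + r * (r * u\<^sup>2 - 2 * u * w + r * w\<^sup>2) = (s\<^sup>2 + r\<^sup>2) * w\<^sup>2 - 2 * r * u * w + r\<^sup>2 * u\<^sup>2"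
      by (simp add: power2_eq_square algebra_simps)
    also have "\<dots> = (s * v)\<^sup>2"
      unfolding s2 w_def by (simp add: power2_eq_square algebra_simps)
    finally show ?thesis
      using \<open>s > 0\<close> unfolding X_def by (simp add: field_simps power_mult_distrib)
  qed
  finally show ?thesis by (simp add: w_def std_normal_density_def)
qed

lemma nn_integral_gauss_conditional:
  assumes "a > 0" "b > 0" "\<bar>r\<bar> < 1" and [measurable]: "F \<in> borel_measurable (borel \<Otimes>\<^sub>M borel)"
  shows "(\<integral>\<^sup>+y. ennreal (normal_density 0 b y) * (ennreal (exp (gauss_log_ratio a b r (a * u, y))) * F (a * u, y)) \<partial>lborel)
       = (\<integral>\<^sup>+v. ennreal (std_normal_density v) * F (gauss_map a b r (u, v)) \<partial>lborel)"
proof -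
  define s where "s = sqrt (1 - r\<^sup>2)"
  have "s > 0" using assms(3) unfolding s_def by (simp add: abs_square_less_1)
  have "(\<integral>\<^sup>+y. ennreal (normal_density 0 b y) * (ennreal (exp (gauss_log_ratio a b r (a * u, y))) * F (a * u, y)) \<partial>lborel)
      = (\<integral>\<^sup>+v. ennreal \<bar>b * s\<bar> * (ennreal (normal_density 0 b (b * r * u + b * s * v))
          * (ennreal (exp (gauss_log_ratio a b r (a * u, b * r * u + b * s * v))) * F (a * u, b * r * u + b * s * v))) \<partial>lborel)"
    by (rule nn_integral_lborel_affine_subst) (use assms(2) \<open>s > 0\<close> in auto)
  also have "\<dots> = (\<integral>\<^sup>+v. ennreal (std_normal_density v) * F (gauss_map a b r (u, v)) \<partial>lborel)"
  proof (intro nn_integral_cong)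
    fix v
    have "b * r * u + b * s * v = b * (r * u + s * v)" by (simp add: algebra_simps)
    then show "ennreal \<bar>b * s\<bar> * (ennreal (normal_density 0 b (b * r * u + b * s * v))
          * (ennreal (exp (gauss_log_ratio a b r (a * u, b * r * u + b * s * v))) * F (a * u, b * r * u + b * s * v)))
        = ennreal (std_normal_density v) * F (gauss_map a b r (u, v))"
      using gauss_conditional_density[OF assms(1-3), of u v] assms(2) \<open>s > 0\<close>
      by (simp add: s_def gauss_map_def ennreal_mult[symmetric] mult.assoc[symmetric])
  qed
  finally show ?thesis .
qed

lemma nn_integral_gauss_pair:
  assumes "a > 0" "b > 0" "\<bar>r\<bar> < 1" and [measurable]: "F \<in> borel_measurable (borel \<Otimes>\<^sub>M borel)"
  shows "(\<integral>\<^sup>+z. F (gauss_map a b r z) \<partial>(normal_measure 1 \<Otimes>\<^sub>M normal_measure 1))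
       = (\<integral>\<^sup>+z. ennreal (exp (gauss_log_ratio a b r z)) * F z \<partial>(normal_measure a \<Otimes>\<^sub>M normal_measure b))"
proof -
  interpret N1: prob_space "normal_measure 1" by (rule prob_space_normal_measure) simp
  interpret Nb: prob_space "normal_measure b" by (rule prob_space_normal_measure) fact
  have "(\<integral>\<^sup>+z. ennreal (exp (gauss_log_ratio a b r z)) * F z \<partial>(normal_measure a \<Otimes>\<^sub>M normal_measure b))
      = (\<integral>\<^sup>+x. ennreal (normal_density 0 a x) * (\<integral>\<^sup>+y. ennreal (normal_density 0 b y)
          * (ennreal (exp (gauss_log_ratio a b r (x, y))) * F (x, y)) \<partial>lborel) \<partial>lborel)"
    by (subst Nb.nn_integral_fst[symmetric]) (auto simp: normal_measure_def nn_integral_density)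
  also have "\<dots> = (\<integral>\<^sup>+u. ennreal \<bar>a\<bar> * (ennreal (normal_density 0 a (0 + a * u)) * (\<integral>\<^sup>+y. ennreal (normal_density 0 b y)
          * (ennreal (exp (gauss_log_ratio a b r (0 + a * u, y))) * F (0 + a * u, y)) \<partial>lborel)) \<partial>lborel)"
    by (rule nn_integral_lborel_affine_subst) (use assms(1) in auto)
  also have "\<dots> = (\<integral>\<^sup>+u. ennreal (std_normal_density u)
          * (\<integral>\<^sup>+v. ennreal (std_normal_density v) * F (gauss_map a b r (u, v)) \<partial>lborel) \<partial>lborel)"
    unfolding add_0 nn_integral_gauss_conditional[OF assms]
    using normal_density_scale[OF assms(1)] assms(1)
    by (intro nn_integral_cong) (simp add: ennreal_mult[symmetric] mult.assoc[symmetric])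
  also have "\<dots> = (\<integral>\<^sup>+z. F (gauss_map a b r z) \<partial>(normal_measure 1 \<Otimes>\<^sub>M normal_measure 1))"
    by (subst N1.nn_integral_fst[symmetric]) (auto simp: normal_measure_def nn_integral_density)
  finally show ?thesis ..
qed

lemma gauss_pair_density:
  assumes "a > 0" "b > 0" "\<bar>r\<bar> < 1"
  shows "gauss_pair a b r = density (normal_measure a \<Otimes>\<^sub>M normal_measure b) (\<lambda>z. ennreal (exp (gauss_log_ratio a b r z)))"
proof (rule measure_eqI)
  fix A assume "A \<in> sets (gauss_pair a b r)"
  then have [measurable]: "A \<in> sets (borel \<Otimes>\<^sub>M borel)" by (simp add: gauss_pair_def)
  have "emeasure (gauss_pair a b r) A = (\<integral>\<^sup>+z. indicator A (gauss_map a b r z) \<partial>(normal_measure 1 \<Otimes>\<^sub>M normal_measure 1))"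
    unfolding gauss_pair_def by (rule emeasure_distr_eq_nn_integral) auto
  also have "\<dots> = emeasure (density (normal_measure a \<Otimes>\<^sub>M normal_measure b) (\<lambda>z. ennreal (exp (gauss_log_ratio a b r z)))) A"
    by (subst nn_integral_gauss_pair[OF assms]) (auto simp: emeasure_density)
  finally show "emeasure (gauss_pair a b r) A = emeasure (density (normal_measure a \<Otimes>\<^sub>M normal_measure b) (\<lambda>z. ennreal (exp (gauss_log_ratio a b r z)))) A" .
qed (simp add: gauss_pair_def sets_normal_measure_pair)

lemma distr_normal_measure_scale:
  assumes "a > 0"
  shows "distr (normal_measure 1) borel (\<lambda>u. a * u) = normal_measure a"
proof (rule measure_eqI)
  fix A assume "A \<in> sets (distr (normal_measure 1) borel (\<lambda>u. a * u))"
  then have [measurable]: "A \<in> sets borel" by simp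
  have "emeasure (distr (normal_measure 1) borel (\<lambda>u. a * u)) A = (\<integral>\<^sup>+u. indicator A (a * u) \<partial>normal_measure 1)"
    by (rule emeasure_distr_eq_nn_integral) auto
  also have "\<dots> = (\<integral>\<^sup>+u. ennreal \<bar>a\<bar> * (ennreal (normal_density 0 a (0 + a * u)) * indicator A (0 + a * u)) \<partial>lborel)"
    unfolding normal_measure_def using normal_density_scale[OF assms] assms
    by (subst nn_integral_density) (auto intro!: nn_integral_cong simp: ennreal_mult[symmetric] mult.assoc[symmetric])
  also have "\<dots> = emeasure (normal_measure a) A"
    unfolding normal_measure_def
    by (subst nn_integral_lborel_affine_subst[symmetric]) (use assms in \<open>auto simp: emeasure_density\<close>)
  finally show "emeasure (distr (normal_measure 1) borel (\<lambda>u. a * u)) A = emeasure (normal_measure a) A" .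
qed simp

lemma distr_normal_pair_scaled_fst:
  assumes "a > 0" and [measurable]: "T \<in> (borel \<Otimes>\<^sub>M borel) \<rightarrow>\<^sub>M (borel \<Otimes>\<^sub>M borel)"
    "p \<in> borel_measurable (borel \<Otimes>\<^sub>M borel)" and "\<And>z. p (T z) = a * fst z"
  shows "distr (distr (normal_measure 1 \<Otimes>\<^sub>M normal_measure 1) (borel \<Otimes>\<^sub>M borel) T) borel p = normal_measure a"
proof -
  interpret N1: prob_space "normal_measure 1" by (rule prob_space_normal_measure) simp
  have "distr (distr (normal_measure 1 \<Otimes>\<^sub>M normal_measure 1) (borel \<Otimes>\<^sub>M borel) T) borel p
      = distr (normal_measure 1 \<Otimes>\<^sub>M normal_measure 1) borel (\<lambda>z. a * fst z)"
    by (subst distr_distr) (auto simp: comp_def assms(4))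
  also have "\<dots> = distr (distr (normal_measure 1 \<Otimes>\<^sub>M normal_measure 1) (normal_measure 1) fst) borel (\<lambda>u. a * u)"
    by (subst distr_distr) (auto simp: comp_def)
  also have "\<dots> = normal_measure a"
    using N1.distr_pair_fst[of "normal_measure 1"] distr_normal_measure_scale[OF assms(1)] by (simp only:)
  finally show ?thesis .
qed

lemma sets_gauss_pair [simp, measurable_cong]: "sets (gauss_pair a b r) = sets (borel \<Otimes>\<^sub>M borel)"
  by (simp add: gauss_pair_def)

lemma prob_space_gauss_pair: "prob_space (gauss_pair a b r)"
proof -
  interpret N1: prob_space "normal_measure 1" by (rule prob_space_normal_measure) simp
  interpret pair_prob_space "normal_measure 1" "normal_measure 1" by unfold_locales
  show ?thesis unfolding gauss_pair_def by (rule prob_space_distr) simp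
qed

lemma distr_gauss_pair_fst: "a > 0 \<Longrightarrow> distr (gauss_pair a b r) borel fst = normal_measure a"
  unfolding gauss_pair_def by (rule distr_normal_pair_scaled_fst) (auto simp: gauss_map_def split: prod.splits)

lemma distr_gauss_pair_snd:
  assumes "a > 0" "b > 0" "\<bar>r\<bar> < 1"
  shows "distr (gauss_pair a b r) borel snd = normal_measure b"
proof -
  interpret pair_sigma_finite "normal_measure a" "normal_measure b"
    by (intro pair_sigma_finite.intro prob_space_imp_sigma_finite prob_space_normal_measure assms)
  have [measurable]: "(\<lambda>(x, y). (y, x)) \<in> normal_measure b \<Otimes>\<^sub>M normal_measure a \<rightarrow>\<^sub>M normal_measure a \<Otimes>\<^sub>M normal_measure b"
    by measurable
  have "distr (gauss_pair a b r) borel snd = distr (gauss_pair b a r) borel fst"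
  proof (rule measure_eqI)
    fix B assume "B \<in> sets (distr (gauss_pair a b r) borel snd)"
    then have [measurable]: "B \<in> sets borel" by simp
    have "emeasure (distr (gauss_pair a b r) borel snd) B
        = (\<integral>\<^sup>+z. ennreal (exp (gauss_log_ratio a b r z)) * indicator B (snd z) \<partial>(normal_measure a \<Otimes>\<^sub>M normal_measure b))"
      unfolding gauss_pair_density[OF assms]
      by (subst emeasure_distr_eq_nn_integral) (auto simp: nn_integral_density)
    also have "\<dots> = (\<integral>\<^sup>+z. ennreal (exp (gauss_log_ratio a b r z)) * indicator B (snd z)
        \<partial>distr (normal_measure b \<Otimes>\<^sub>M normal_measure a) (normal_measure a \<Otimes>\<^sub>M normal_measure b) (\<lambda>(x, y). (y, x)))"
      by (simp only: distr_pair_swap[symmetric])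
    also have "\<dots> = (\<integral>\<^sup>+z. ennreal (exp (gauss_log_ratio b a r z)) * indicator B (fst z) \<partial>(normal_measure b \<Otimes>\<^sub>M normal_measure a))"
      by (subst nn_integral_distr) (auto intro!: nn_integral_cong simp: gauss_log_ratio_swap split: prod.splits)
    also have "\<dots> = emeasure (distr (gauss_pair b a r) borel fst) B"
      unfolding gauss_pair_density[OF assms(2,1,3)]
      by (subst emeasure_distr_eq_nn_integral) (auto simp: nn_integral_density)
    finally show "emeasure (distr (gauss_pair a b r) borel snd) B = emeasure (distr (gauss_pair b a r) borel fst) B" .
  qed simp
  then show ?thesis using distr_gauss_pair_fst[OF assms(2)] by simp
qed

lemma abs_mult_le_sum_squares: "\<bar>x * y\<bar> \<le> x\<^sup>2 + (y::real)\<^sup>2"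
proof -
  have "2 * \<bar>x * y\<bar> \<le> x\<^sup>2 + y\<^sup>2"
    using sum_squares_bound[of "\<bar>x\<bar>" "\<bar>y\<bar>"] by (simp add: abs_mult mult.assoc)
  then show ?thesis using abs_ge_zero[of "x * y"] by linarith
qed

lemma
  assumes "\<sigma> > 0" and [measurable]: "p \<in> borel_measurable M" and "distr M borel p = normal_measure \<sigma>"
  shows integrable_square_normal_marginal: "integrable M (\<lambda>z. (p z)\<^sup>2)"
    and integral_square_normal_marginal: "(\<integral>z. (p z)\<^sup>2 \<partial>M) = \<sigma>\<^sup>2"
proof -
  have "integrable lborel (\<lambda>x. normal_density 0 \<sigma> x * x\<^sup>2)"
    using integrable_normal_moment[of \<sigma> 0 2] assms(1) by simp
  then have "integrable (distr M borel p) (\<lambda>x. x\<^sup>2)"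
    unfolding assms(3) normal_measure_def by (subst integrable_density) auto
  then show "integrable M (\<lambda>z. (p z)\<^sup>2)"
    by (subst (asm) integrable_distr_eq) auto
  have "(\<integral>z. (p z)\<^sup>2 \<partial>M) = (\<integral>x. x\<^sup>2 \<partial>distr M borel p)"
    by (rule integral_distr[symmetric]) auto
  also have "\<dots> = \<sigma>\<^sup>2"
    unfolding assms(3) normal_measure_def using integral_normal_moment_even[of \<sigma> 0 1] assms(1)
    by (subst integral_density) (auto simp: power2_eq_square)
  finally show "(\<integral>z. (p z)\<^sup>2 \<partial>M) = \<sigma>\<^sup>2" .
qed

lemma
  defines "M \<equiv> normal_measure 1 \<Otimes>\<^sub>M normal_measure 1"
  shows integrable_std_normal_pair_squares: "integrable M (\<lambda>z. (fst z)\<^sup>2)" "integrable M (\<lambda>z. (snd z)\<^sup>2)"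
    and integral_std_normal_pair_squares: "(\<integral>z. (fst z)\<^sup>2 \<partial>M) = 1" "(\<integral>z. (snd z)\<^sup>2 \<partial>M) = 1"
    and integrable_std_normal_pair_product: "integrable M (\<lambda>z. fst z * snd z)"
    and integral_std_normal_pair_product: "(\<integral>z. fst z * snd z \<partial>M) = 0"
proof -
  interpret N1: prob_space "normal_measure 1" by (rule prob_space_normal_measure) simp
  interpret pair_prob_space "normal_measure 1" "normal_measure 1" by unfold_locales
  have [measurable]: "fst \<in> borel_measurable M" "snd \<in> borel_measurable M"
    by (simp_all add: M_def)
  have fst: "distr M borel fst = normal_measure 1"
    using N1.distr_pair_fst[of "normal_measure 1"] unfolding M_def by (metis distr_cong sets_normal_measure)
  have "distr M borel snd = distr (distr M M (\<lambda>(x, y). (y, x))) borel snd"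
    unfolding M_def by (simp add: distr_pair_swap[symmetric])
  also have "\<dots> = distr M borel fst"
    by (subst distr_distr) (auto simp: comp_def M_def intro!: distr_cong split: prod.splits)
  finally have snd: "distr M borel snd = normal_measure 1" using fst by simp
  show sq: "integrable M (\<lambda>z. (fst z)\<^sup>2)" "integrable M (\<lambda>z. (snd z)\<^sup>2)"
    "(\<integral>z. (fst z)\<^sup>2 \<partial>M) = 1" "(\<integral>z. (snd z)\<^sup>2 \<partial>M) = 1"
    using integrable_square_normal_marginal[of 1 fst M] integral_square_normal_marginal[of 1 fst M]
      integrable_square_normal_marginal[of 1 snd M] integral_square_normal_marginal[of 1 snd M] fst snd
    by simp_all
  show prod: "integrable M (\<lambda>z. fst z * snd z)"
    by (rule Bochner_Integration.integrable_bound[where f="\<lambda>z. (fst z)\<^sup>2 + (snd z)\<^sup>2"])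
       (use sq in \<open>auto intro: abs_mult_le_sum_squares\<close>)
  have "(\<integral>z. fst z * snd z \<partial>M) = (\<integral>u. \<integral>v. u * v \<partial>normal_measure 1 \<partial>normal_measure 1)"
    using integral_fst[of "\<lambda>u v. u * v"] prod by (simp add: M_def case_prod_beta')
  also have "\<dots> = 0"
    using integral_std_normal_moment_odd[of 0] by (simp add: normal_measure_def integral_density)
  finally show "(\<integral>z. fst z * snd z \<partial>M) = 0" .
qed

lemma
  assumes "\<bar>r\<bar> \<le> 1"
  shows integrable_gauss_pair_distortion: "integrable (gauss_pair a b r) (\<lambda>z. (fst z - snd z)\<^sup>2)"
    and integral_gauss_pair_distortion: "(\<integral>z. (fst z - snd z)\<^sup>2 \<partial>gauss_pair a b r) = a\<^sup>2 + b\<^sup>2 - 2 * r * a * b"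
proof -
  define s where "s = sqrt (1 - r\<^sup>2)"
  have s2: "s\<^sup>2 = 1 - r\<^sup>2" unfolding s_def using assms by (simp add: abs_square_le_1)
  have expand: "(\<lambda>z. (fst (gauss_map a b r z) - snd (gauss_map a b r z))\<^sup>2)
      = (\<lambda>z. (a - b * r)\<^sup>2 * (fst z)\<^sup>2 - 2 * (a - b * r) * (b * s) * (fst z * snd z) + (b * s)\<^sup>2 * (snd z)\<^sup>2)"
    by (auto simp: gauss_map_def s_def power2_eq_square algebra_simps)
  have [measurable]: "gauss_map a b r \<in> normal_measure 1 \<Otimes>\<^sub>M normal_measure 1 \<rightarrow>\<^sub>M borel \<Otimes>\<^sub>M borel"
    by simp
  show "integrable (gauss_pair a b r) (\<lambda>z. (fst z - snd z)\<^sup>2)"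
    unfolding gauss_pair_def
    using integrable_std_normal_pair_squares integrable_std_normal_pair_product
    by (subst integrable_distr_eq) (auto simp: expand)
  have "(\<integral>z. (fst z - snd z)\<^sup>2 \<partial>gauss_pair a b r)
      = (\<integral>z. (fst (gauss_map a b r z) - snd (gauss_map a b r z))\<^sup>2 \<partial>(normal_measure 1 \<Otimes>\<^sub>M normal_measure 1))"
    unfolding gauss_pair_def by (rule integral_distr) auto
  also have "\<dots> = (a - b * r)\<^sup>2 + (b * s)\<^sup>2"
    using integrable_std_normal_pair_squares integrable_std_normal_pair_product
      integral_std_normal_pair_squares integral_std_normal_pair_product
    by (simp add: expand)
  also have "\<dots> = a\<^sup>2 + b\<^sup>2 - 2 * r * a * b"
    unfolding power_mult_distrib s2 by (simp add: power2_eq_square algebra_simps)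
  finally show "(\<integral>z. (fst z - snd z)\<^sup>2 \<partial>gauss_pair a b r) = a\<^sup>2 + b\<^sup>2 - 2 * r * a * b" .
qed

lemma jointly_gaussian_gauss_pair: "jointly_gaussian (gauss_pair a b r)"
  unfolding jointly_gaussian_def
proof (intro exI)
  show "gauss_pair a b r = distr (density lborel std_normal_density \<Otimes>\<^sub>M density lborel std_normal_density)
      (borel \<Otimes>\<^sub>M borel) (\<lambda>(u, v). (a * u + 0 * v + 0, (b * r) * u + (b * sqrt (1 - r\<^sup>2)) * v + 0))"
    unfolding gauss_pair_def normal_measure_def
    by (intro distr_cong) (auto simp: gauss_map_def algebra_simps)
qed

lemma gauss_coupling_gauss_pair:
  assumes "a > 0" "b > 0" "-1 < r" "r \<le> 1" and "a\<^sup>2 + b\<^sup>2 - 2 * r * a * b \<le> D"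
  shows "gauss_coupling a b D (gauss_pair a b r)"
proof -
  have "distr (gauss_pair a b r) borel snd = normal_measure b"
  proof (cases "r = 1")
    case True
    then show ?thesis
      unfolding gauss_pair_def
      by (intro distr_normal_pair_scaled_fst) (auto simp: gauss_map_def assms(2) split: prod.splits)
  next
    case False
    with assms show ?thesis by (intro distr_gauss_pair_snd) auto
  qed
  then show ?thesis
    using assms distr_gauss_pair_fst[OF assms(1)] prob_space_gauss_pair
      integrable_gauss_pair_distortion integral_gauss_pair_distortion
    unfolding gauss_coupling_def normal_measure_def by auto
qed

lemma nn_integral_divide_density_le:
  fixes g :: "'a \<Rightarrow> real"
  assumes "P = density Q R" and [measurable]: "R \<in> borel_measurable Q" "g \<in> borel_measurable Q"
  shows "(\<integral>\<^sup>+z. ennreal (g z / enn2real (R z)) \<partial>P) \<le> (\<integral>\<^sup>+z. ennreal (g z) \<partial>Q)"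
proof -
  have "(\<integral>\<^sup>+z. ennreal (g z / enn2real (R z)) \<partial>P) = (\<integral>\<^sup>+z. R z * ennreal (g z / enn2real (R z)) \<partial>Q)"
    unfolding assms(1) by (rule nn_integral_density) simp_all
  also have "\<dots> \<le> (\<integral>\<^sup>+z. ennreal (g z) \<partial>Q)"
  proof (rule nn_integral_mono)
    fix z
    show "R z * ennreal (g z / enn2real (R z)) \<le> ennreal (g z)"
    proof (cases "R z = \<infinity> \<or> R z = 0")
      case False
      then have R: "R z = ennreal (enn2real (R z))" "enn2real (R z) > 0"
        by (auto simp: less_top enn2real_positive_iff top.not_eq_extremum zero_less_iff_neq_zero)
      have "R z * ennreal (g z / enn2real (R z)) = ennreal (enn2real (R z) * (g z / enn2real (R z)))"
        using R by (subst ennreal_mult') auto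
      then show ?thesis using R(2) by simp
    qed auto
  qed
  finally show ?thesis .
qed

text \<open>Gibbs' inequality, pointwise \<open>ln t \<le> t - 1\<close> for \<open>t = exp g / (dP/dQ)\<close>.\<close>
lemma KL_divergence_ge_integral:
  fixes g :: "'a \<Rightarrow> real"
  assumes "prob_space P" "sigma_finite_measure Q" "sets P = sets Q" "absolutely_continuous Q P"
    and "integrable P (entropy_density (exp 1) Q P)"
    and [measurable]: "g \<in> borel_measurable Q" and "integrable P g"
    and "(\<integral>\<^sup>+z. ennreal (exp (g z)) \<partial>Q) \<le> 1"
  shows "(\<integral>z. g z \<partial>P) \<le> KL_divergence (exp 1) Q P"
proof -
  interpret P: prob_space P by fact
  interpret Q: sigma_finite_measure Q by fact
  define f where "f z = enn2real (RN_deriv Q P z)" for z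
  define h where "h z = exp (g z) / f z" for z
  have P_density: "P = density Q (RN_deriv Q P)"
    using Q.density_RN_deriv[OF assms(4,3)] by simp
  have [measurable]: "f \<in> borel_measurable Q" "h \<in> borel_measurable Q"
    unfolding f_def h_def by measurable
  then have [measurable]: "f \<in> borel_measurable P" "h \<in> borel_measurable P"
    by (simp_all add: measurable_cong_sets[OF assms(3) refl])
  have "AE z in Q. RN_deriv Q P z \<noteq> \<infinity>"
    by (rule Q.RN_deriv_finite[OF _ assms(4,3)]) unfold_locales
  then have f_pos: "AE z in P. 0 < f z"
    by (subst P_density, subst AE_density)
       (auto elim!: AE_mp simp: f_def enn2real_positive_iff top.not_eq_extremum)
  have h_nn: "(\<integral>\<^sup>+z. ennreal (h z) \<partial>P) \<le> 1"
    using nn_integral_divide_density_le[OF P_density, of "\<lambda>z. exp (g z)"] assms(8)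
    unfolding h_def f_def by simp
  have h_int: "integrable P h"
    using h_nn by (intro integrableI_nonneg) (auto simp: h_def f_def top.not_eq_extremum intro: le_less_trans)
  have h_le: "(\<integral>z. h z \<partial>P) \<le> 1"
    using h_nn by (subst integral_eq_nn_integral) (auto simp: h_def f_def intro: enn2real_leI)
  have ent: "entropy_density (exp 1) Q P = (\<lambda>z. ln (f z))"
    by (auto simp: entropy_density_def f_def log_def)
  have "(\<integral>z. 1 - h z \<partial>P) \<le> (\<integral>z. ln (f z) - g z \<partial>P)"
  proof (rule integral_mono_AE)
    show "AE z in P. 1 - h z \<le> ln (f z) - g z"
      using f_pos
    proof (rule AE_mp, intro AE_I2 impI)
      fix z assume "0 < f z"
      then have "ln (h z) = g z - ln (f z)" "0 < h z" by (simp_all add: h_def ln_div)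
      then show "1 - h z \<le> ln (f z) - g z" using ln_le_minus_one[of "h z"] by simp
    qed
  qed (use h_int assms(5,7) ent in auto)
  then have "1 - (\<integral>z. h z \<partial>P) \<le> (\<integral>z. ln (f z) \<partial>P) - (\<integral>z. g z \<partial>P)"
    using h_int assms(5,7) unfolding ent by (simp add: P.prob_space)
  with h_le show ?thesis unfolding KL_divergence_def ent by simp
qed

lemma mutual_info_ge_integral:
  assumes "prob_space P" "sets P = sets (borel \<Otimes>\<^sub>M borel)"
    and [measurable]: "g \<in> borel_measurable (borel \<Otimes>\<^sub>M borel)" and "integrable P g"
    and "(\<integral>\<^sup>+z. ennreal (exp (g z)) \<partial>(distr P borel fst \<Otimes>\<^sub>M distr P borel snd)) \<le> 1"
  shows "ereal (\<integral>z. g z \<partial>P) \<le> mutual_info P"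
proof -
  interpret P: prob_space P by fact
  define Q where "Q = distr P borel fst \<Otimes>\<^sub>M distr P borel snd"
  have sets_Q: "sets Q = sets (borel \<Otimes>\<^sub>M borel)"
    unfolding Q_def by (rule sets_pair_measure_cong) simp_all
  have "prob_space Q"
    unfolding Q_def
    by (intro prob_space_pair P.prob_space_distr) (simp_all add: measurable_cong_sets[OF assms(2) refl])
  moreover have "g \<in> borel_measurable Q"
    unfolding measurable_cong_sets[OF sets_Q refl] by simp
  ultimately have "absolutely_continuous Q P \<Longrightarrow> integrable P (entropy_density (exp 1) Q P)
      \<Longrightarrow> (\<integral>z. g z \<partial>P) \<le> KL_divergence (exp 1) Q P"
    using assms(1,2,4,5) sets_Q unfolding Q_def[symmetric]
    by (intro KL_divergence_ge_integral) (auto intro: prob_space_imp_sigma_finite)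
  then show ?thesis
    unfolding mutual_info_def Let_def Q_def[symmetric] by auto
qed

lemma mutual_info_eq_integral:
  assumes "distr P borel fst \<Otimes>\<^sub>M distr P borel snd = Q" "sigma_finite_measure Q"
    and "P = density Q (\<lambda>z. ennreal (exp (g z)))"
    and [measurable]: "g \<in> borel_measurable Q" and "integrable P g"
  shows "mutual_info P = ereal (\<integral>z. g z \<partial>P)"
proof -
  interpret Q: sigma_finite_measure Q by fact
  have "AE z in Q. ennreal (exp (g z)) = RN_deriv Q P z"
    using assms(3) by (intro Q.RN_deriv_unique) simp_all
  then have "AE z in P. ennreal (exp (g z)) = RN_deriv Q P z"
    by (subst assms(3), subst AE_density) (auto elim: AE_mp)
  then have entropy: "AE z in P. entropy_density (exp 1) Q P z = g z"
  proof eventually_elim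
    case (elim z)
    then show ?case by (simp add: entropy_density_def log_def flip: elim)
  qed
  have sets_P: "sets P = sets Q"
    by (subst assms(3)) simp
  have [measurable]: "g \<in> borel_measurable P" "entropy_density (exp 1) Q P \<in> borel_measurable P"
    unfolding measurable_cong_sets[OF sets_P refl] by simp_all
  have "integrable P (entropy_density (exp 1) Q P)"
    using assms(5) by (rule integrable_cong_AE_imp) (use entropy in \<open>auto elim: AE_mp\<close>)
  moreover have "KL_divergence (exp 1) Q P = (\<integral>z. g z \<partial>P)"
    unfolding KL_divergence_def using entropy by (intro integral_cong_AE) auto
  moreover have "absolutely_continuous Q P"
    using assms(3) by (simp add: absolutely_continuousI_density)
  ultimately show ?thesis
    unfolding mutual_info_def Let_def assms(1) by simp
qed

text \<open>The correlation of any coupling of \<open>N(0,a\<^sup>2)\<close> and \<open>N(0,b\<^sup>2)\<close> with \<open>E(X-Y)\<^sup>2 = D\<close>.\<close>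
definition matching_corr :: "real \<Rightarrow> real \<Rightarrow> real \<Rightarrow> real" where
  "matching_corr a b D = (a\<^sup>2 + b\<^sup>2 - D) / (2 * a * b)"

lemma gauss_log_ratio_by_moments:
  assumes "a > 0" "b > 0"
  shows "gauss_log_ratio a b r (x, y) = - ln (sqrt (1 - r\<^sup>2)) - r / (2 * (1 - r\<^sup>2)) *
     (r / a\<^sup>2 * x\<^sup>2 + r / b\<^sup>2 * y\<^sup>2 - (x\<^sup>2 + y\<^sup>2 - (x - y)\<^sup>2) / (a * b))"
proof -
  have "r * (x / a)\<^sup>2 - 2 * (x / a) * (y / b) + r * (y / b)\<^sup>2
      = r / a\<^sup>2 * x\<^sup>2 + r / b\<^sup>2 * y\<^sup>2 - (x\<^sup>2 + y\<^sup>2 - (x - y)\<^sup>2) / (a * b)"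
    using assms by (simp add: field_simps power2_eq_square)
  then show ?thesis unfolding gauss_log_ratio_def by simp
qed

lemma
  assumes "a > 0" "b > 0" "\<bar>r\<bar> < 1" and "sets P = sets (borel \<Otimes>\<^sub>M borel)" "prob_space P"
    and "distr P borel fst = normal_measure a" "distr P borel snd = normal_measure b"
    and "integrable P (\<lambda>z. (fst z - snd z)\<^sup>2)"
  shows integrable_gauss_log_ratio: "integrable P (gauss_log_ratio a b r)"
    and integral_gauss_log_ratio: "(\<integral>z. gauss_log_ratio a b r z \<partial>P)
      = - ln (sqrt (1 - r\<^sup>2)) + r * (matching_corr a b (\<integral>z. (fst z - snd z)\<^sup>2 \<partial>P) - r) / (1 - r\<^sup>2)"
proof -
  interpret prob_space P by fact
  have [measurable]: "fst \<in> borel_measurable P" "snd \<in> borel_measurable P"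
    by (simp_all add: measurable_cong_sets[OF assms(4) refl])
  note moments = integrable_square_normal_marginal[of a fst P] integral_square_normal_marginal[of a fst P]
    integrable_square_normal_marginal[of b snd P] integral_square_normal_marginal[of b snd P]
  have expand: "gauss_log_ratio a b r = (\<lambda>z. - ln (sqrt (1 - r\<^sup>2)) - r / (2 * (1 - r\<^sup>2)) *
     (r / a\<^sup>2 * (fst z)\<^sup>2 + r / b\<^sup>2 * (snd z)\<^sup>2 - ((fst z)\<^sup>2 + (snd z)\<^sup>2 - (fst z - snd z)\<^sup>2) / (a * b)))"
    using gauss_log_ratio_by_moments[OF assms(1,2)] by (auto simp: fun_eq_iff)
  show "integrable P (gauss_log_ratio a b r)"
    unfolding expand using moments assms by auto
  have "1 - r\<^sup>2 \<noteq> 0" using assms(3) by (simp add: abs_square_less_1 less_imp_neq)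
  then show "(\<integral>z. gauss_log_ratio a b r z \<partial>P)
      = - ln (sqrt (1 - r\<^sup>2)) + r * (matching_corr a b (\<integral>z. (fst z - snd z)\<^sup>2 \<partial>P) - r) / (1 - r\<^sup>2)"
    unfolding expand matching_corr_def using moments assms by (simp add: prob_space field_simps)
qed

lemma mutual_info_gauss_pair:
  assumes "a > 0" "b > 0" "\<bar>r\<bar> < 1"
  shows "mutual_info (gauss_pair a b r) = ereal (- ln (sqrt (1 - r\<^sup>2)))"
proof -
  have marginals: "distr (gauss_pair a b r) borel fst = normal_measure a" "distr (gauss_pair a b r) borel snd = normal_measure b"
    using distr_gauss_pair_fst distr_gauss_pair_snd assms by auto
  have "sigma_finite_measure (normal_measure a \<Otimes>\<^sub>M normal_measure b)"
    using assms by (intro prob_space_imp_sigma_finite prob_space_pair prob_space_normal_measure)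
  moreover have "matching_corr a b (\<integral>z. (fst z - snd z)\<^sup>2 \<partial>gauss_pair a b r) = r"
    using assms integral_gauss_pair_distortion[of r a b] by (simp add: matching_corr_def field_simps)
  ultimately show ?thesis
    using mutual_info_eq_integral[OF _ _ gauss_pair_density[OF assms]] marginals
      integrable_gauss_log_ratio[OF assms _ prob_space_gauss_pair] integral_gauss_log_ratio[OF assms _ prob_space_gauss_pair]
      integrable_gauss_pair_distortion[of r a b] assms(3)
    by (simp add: measurable_cong_sets[OF sets_normal_measure_pair refl])
qed

lemma mutual_info_ge_gauss:
  assumes "a > 0" "b > 0" "0 \<le> r" "r < 1" and "gauss_coupling a b D P"
    and "0 \<le> r * (matching_corr a b D - r)"
  shows "ereal (- ln (sqrt (1 - r\<^sup>2))) \<le> mutual_info P"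
proof -
  have P: "sets P = sets (borel \<Otimes>\<^sub>M borel)" "prob_space P" "distr P borel fst = normal_measure a"
    "distr P borel snd = normal_measure b" "integrable P (\<lambda>z. (fst z - snd z)\<^sup>2)"
    "(\<integral>z. (fst z - snd z)\<^sup>2 \<partial>P) \<le> D"
    using assms(5) unfolding gauss_coupling_def normal_measure_def by auto
  have r: "\<bar>r\<bar> < 1" using assms(3,4) by simp
  have "matching_corr a b D \<le> matching_corr a b (\<integral>z. (fst z - snd z)\<^sup>2 \<partial>P)"
    using P(6) assms(1,2) unfolding matching_corr_def by (intro divide_right_mono) auto
  then have "r * (matching_corr a b D - r) \<le> r * (matching_corr a b (\<integral>z. (fst z - snd z)\<^sup>2 \<partial>P) - r)"
    using assms(3) by (intro mult_left_mono) auto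
  then have "0 \<le> r * (matching_corr a b (\<integral>z. (fst z - snd z)\<^sup>2 \<partial>P) - r) / (1 - r\<^sup>2)"
    using assms(6) r by (intro divide_nonneg_nonneg) (auto simp: abs_square_less_1 less_imp_le)
  then have "- ln (sqrt (1 - r\<^sup>2)) \<le> (\<integral>z. gauss_log_ratio a b r z \<partial>P)"
    using integral_gauss_log_ratio[OF assms(1,2) r P(1-5)] by simp
  also have "(\<integral>\<^sup>+z. ennreal (exp (gauss_log_ratio a b r z)) \<partial>(normal_measure a \<Otimes>\<^sub>M normal_measure b))
      = emeasure (gauss_pair a b r) (space (gauss_pair a b r))"
    unfolding gauss_pair_density[OF assms(1,2) r]
    using sets.top[of "normal_measure a \<Otimes>\<^sub>M normal_measure b"]
    by (subst emeasure_density)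
       (auto simp: measurable_cong_sets[OF sets_normal_measure_pair refl] sets_normal_measure_pair intro!: nn_integral_cong)
  then have "ereal (\<integral>z. gauss_log_ratio a b r z \<partial>P) \<le> mutual_info P"
    using P integrable_gauss_log_ratio[OF assms(1,2) r P(1-5)] prob_space.emeasure_space_1[OF prob_space_gauss_pair]
    by (intro mutual_info_ge_integral) auto
  finally show ?thesis by simp
qed

lemma mutual_info_infinite:
  assumes "a > 0" "b > 0" "gauss_coupling a b D P" "1 \<le> matching_corr a b D"
  shows "mutual_info P = \<infinity>"
proof (rule ereal_top)
  fix B :: real
  define r where "r = sqrt (1 - exp (- 2 * \<bar>B\<bar>))"
  have "exp (- 2 * \<bar>B\<bar>) \<le> 1" "0 < exp (- 2 * \<bar>B\<bar>)" by simp_all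
  then have r: "0 \<le> r" "r < 1" "1 - r\<^sup>2 = exp (- 2 * \<bar>B\<bar>)" unfolding r_def by auto
  then have "- ln (sqrt (1 - r\<^sup>2)) = \<bar>B\<bar>" by (simp add: ln_sqrt)
  moreover have "0 \<le> r * (matching_corr a b D - r)" using r assms(4) by simp
  ultimately have "ereal \<bar>B\<bar> \<le> mutual_info P"
    using mutual_info_ge_gauss[OF assms(1,2) r(1,2) assms(3)] by simp
  then show "ereal B \<le> mutual_info P" by (rule order_trans[rotated]) simp
qed

lemma I_out_infinite:
  assumes "a > 0" "b > 0" "1 \<le> matching_corr a b D"
  shows "I_out a b D = \<infinity>"
  unfolding I_out_def using mutual_info_infinite[OF assms(1,2) _ assms(3)]
  by (simp add: top_ereal_def[symmetric] INF_eq_const cong: INF_cong)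

lemma I_out_attained_by_gauss_pair:
  assumes "a > 0" "b > 0" "matching_corr a b D < 1"
  defines "r \<equiv> max 0 (matching_corr a b D)"
  shows "gauss_coupling a b D (gauss_pair a b r)" and "I_out a b D = mutual_info (gauss_pair a b r)"
proof -
  have r: "0 \<le> r" "r < 1" using assms(3) unfolding r_def by auto
  have "a\<^sup>2 + b\<^sup>2 - D \<le> r * (2 * a * b)"
    using assms(1,2) unfolding r_def matching_corr_def by (auto simp: max_def field_simps)
  then show feasible: "gauss_coupling a b D (gauss_pair a b r)"
    using r by (intro gauss_coupling_gauss_pair[OF assms(1,2)]) (auto simp: algebra_simps)
  have "mutual_info (gauss_pair a b r) \<le> mutual_info P" if "gauss_coupling a b D P" for P
    using mutual_info_ge_gauss[OF assms(1,2) r that] mutual_info_gauss_pair[OF assms(1,2)] r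
    unfolding r_def by (auto simp: max_def)
  then show "I_out a b D = mutual_info (gauss_pair a b r)"
    unfolding I_out_def using feasible by (intro antisym INF_lower INF_greatest) auto
qed

lemma I_out_eq_INF_jointly_gaussian:
  assumes "a > 0" "b > 0"
  shows "I_out a b D = (INF P \<in> {P. gauss_coupling a b D P \<and> jointly_gaussian P}. mutual_info P)"
proof (rule antisym)
  show "I_out a b D \<le> (INF P \<in> {P. gauss_coupling a b D P \<and> jointly_gaussian P}. mutual_info P)"
    unfolding I_out_def by (rule INF_superset_mono) auto
  show "(INF P \<in> {P. gauss_coupling a b D P \<and> jointly_gaussian P}. mutual_info P) \<le> I_out a b D"
  proof (cases "matching_corr a b D < 1")
    case True
    note optimal = I_out_attained_by_gauss_pair[OF assms True]
    have "(INF P \<in> {P. gauss_coupling a b D P \<and> jointly_gaussian P}. mutual_info P)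
        \<le> mutual_info (gauss_pair a b (max 0 (matching_corr a b D)))"
      using optimal(1) jointly_gaussian_gauss_pair by (intro INF_lower) auto
    then show ?thesis using optimal(2) by simp
  qed (use I_out_infinite[OF assms] in simp)
qed

lemma I_out_closed_form:
  assumes "a > 0" "b > 0" "(a - b)\<^sup>2 \<le> D" "D \<le> a\<^sup>2 + b\<^sup>2"
  defines "r \<equiv> matching_corr a b D"
  shows "(\<exists>P. gauss_coupling a b D P \<and> jointly_gaussian P \<and> mutual_info P = I_out a b D) \<and>
    I_out a b D = (if r\<^sup>2 = 1 then \<infinity> else ereal (1/2 * ln (1 / (1 - r\<^sup>2))))"
proof (cases "r = 1")
  case True
  then have corr: "matching_corr a b D = 1" by (simp add: r_def)
  then have "gauss_coupling a b D (gauss_pair a b 1)"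
    using assms(1,2) unfolding matching_corr_def
    by (intro gauss_coupling_gauss_pair[OF assms(1,2)]) (auto simp: field_simps)
  then show ?thesis
    using True corr mutual_info_infinite[OF assms(1,2)] I_out_infinite[OF assms(1,2)] jointly_gaussian_gauss_pair
    by auto
next
  case False
  have "0 \<le> r" "r \<le> 1"
    using assms(1-4) unfolding r_def matching_corr_def by (auto simp: field_simps power2_eq_square)
  with False have corr: "matching_corr a b D < 1" "max 0 (matching_corr a b D) = r" and "\<bar>r\<bar> < 1"
    unfolding r_def by auto
  note optimal = I_out_attained_by_gauss_pair[OF assms(1,2) corr(1), unfolded corr(2)]
  have "0 < 1 - r\<^sup>2"
    using \<open>\<bar>r\<bar> < 1\<close> by (simp add: abs_square_less_1)
  then have "- ln (sqrt (1 - r\<^sup>2)) = 1/2 * ln (1 / (1 - r\<^sup>2))" "r\<^sup>2 \<noteq> 1"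
    by (simp_all add: ln_sqrt ln_div)
  then show ?thesis
    using optimal mutual_info_gauss_pair[OF assms(1,2) \<open>\<bar>r\<bar> < 1\<close>] jointly_gaussian_gauss_pair
    by auto
qed

theorem mainTheorem9:
  fixes sx sy :: real
  assumes "sx > 0" and "sy > 0"
  shows "(\<forall>D. I_out sx sy D =
            (INF P \<in> {P. gauss_coupling sx sy D P \<and> jointly_gaussian P}. mutual_info P)) \<and>
         (\<forall>D. (sx - sy)\<^sup>2 \<le> D \<and> D \<le> sx\<^sup>2 + sy\<^sup>2 \<longrightarrow>
            (let r = (sx\<^sup>2 + sy\<^sup>2 - D) / (2 * sx * sy) in
              (\<exists>P. gauss_coupling sx sy D P \<and> jointly_gaussian P \<and> mutual_info P = I_out sx sy D) \<and>
              I_out sx sy D = (if r\<^sup>2 = 1 then \<infinity> else ereal (1/2 * ln (1 / (1 - r\<^sup>2))))))"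
  using I_out_eq_INF_jointly_gaussian[OF assms] I_out_closed_form[OF assms]
  unfolding matching_corr_def Let_def by blast

end
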